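(* Let $\mathcal N$ be a network and $T\ge1$. A nonnegative vector $R\in[0,\infty)^{\mathcal L}$ belongs to $\mathcal R^{(\mathcal M_T,\mathcal E_T)}$ if and only if there exists $R'\in\mathrm{conv}\{R_C: C\in\mathrm{cycle}^*(\mathcal M_T,\mathcal E_T)\}$ with $R\preccurlyeq R'$.
   Context: A network is a triple $\mathcal N=(\mathcal L,\mathcal I,D_{\mathcal L})$ where $\mathcal L$ is a finite nonempty set of links, each $\mathcal I(l)$ is a collection of nonempty subsets of $\mathcal L$, and $D_{\mathcal L}$ assigns an integer $D_{\mathcal L}(l,l')$ to every pair with $l'\in\phi$ for some $\phi\in\mathcal I(l)$. A schedule is a map $S:\mathcal L\times\mathbb Z\to\{0,1\}$; $S(l,t)$ has a collision if there is $\phi\in\mathcal I(l)$ with $S(l',t+D_{\mathcal L}(l,l'))=1$ for all $l'\in\phi$; $S$ is collision free if no $(l,t)$ with $S(l,t)=1$ has a collision. $S[T,k]$ is the $|\mathcal L|\times T$ binary matrix with $S[T,k](l,j)=S(l,kT+j)$. The scheduling graph $(\mathcal M_T,\mathcal E_T)$ has vertex set $\mathcal M_T$ = all $|\mathcal L|\times T$ binary matrices $A$ with $A=S[T,0]$ for some collision-free $S$, and edge set $\mathcal E_T$ = all pairs $(A,B)$ with $A=S[T,0]$, $B=S[T,1]$ for some collision-free $S$. A cycle is a sequence $(A_0,\dots,A_k)$, $k\ge1$, with $(A_i,A_{i+1})\in\mathcal E_T$, $A_k=A_0$, and $A_0,\dots,A_{k-1}$ pairwise distinct; its rate vector is $R_C=\frac{1}{kT}\sum_{i=0}^{k-1}A_i\mathbf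 1$ ($\mathbf 1$ the all-ones vector of length $T$). $\mathcal R^{(\mathcal M_T,\mathcal E_T)}$ is the convex hull of the rate vectors of all cycles. For two sequences of matrices of the same length, $(A_0,\dots,A_k)\succcurlyeq(B_0,\dots,B_k)$ means $A_i\succcurlyeq B_i$ entrywise for all $i$. $\mathrm{cycle}^*(\mathcal M_T,\mathcal E_T)$ (the maximal cycles) is the set of cycles $C$ such that there is no cycle $C'\neq C$ of the same length with $C'\succcurlyeq C$. The relation $R\preccurlyeq R'$ on vectors is entrywise. *)

theory Defs
  imports "HOL-Analysis.Analysis"
begin

text \<open>Links are the elements of a finite type 'l (so the link set is UNIV, finite and nonempty).
  A network is given by the interference map I :: 'l => 'l set set and the delay map
  D :: 'l => 'l => int.  A schedule is S :: 'l => int => bool (True = 1).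
  An |L| x T binary matrix is represented as 'l => nat => bool, with all columns j >= T
  set to False (canonical representation).\<close>

type_synonym 'l sched = "'l \<Rightarrow> int \<Rightarrow> bool"
type_synonym 'l bmat = "'l \<Rightarrow> nat \<Rightarrow> bool"

definition has_collision :: "('l \<Rightarrow> 'l set set) \<Rightarrow> ('l \<Rightarrow> 'l \<Rightarrow> int) \<Rightarrow> 'l sched \<Rightarrow> 'l \<Rightarrow> int \<Rightarrow> bool" where
  "has_collision I D S l t \<longleftrightarrow> (\<exists>\<phi>\<in>I l. \<forall>l'\<in>\<phi>. S l' (t + D l l'))"

definition collision_free :: "('l \<Rightarrow> 'l set set) \<Rightarrow> ('l \<Rightarrow> 'l \<Rightarrow> int) \<Rightarrow> 'l sched \<Rightarrow> bool" where
  "collision_free I D S \<longleftrightarrow> (\<forall>l t. S l t \<longrightarrow> \<not> has_collision I D S l t)"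

definition block :: "nat \<Rightarrow> int \<Rightarrow> 'l sched \<Rightarrow> 'l bmat" where
  "block T k S = (\<lambda>l j. j < T \<and> S l (k * int T + int j))"

definition sched_vertices :: "('l \<Rightarrow> 'l set set) \<Rightarrow> ('l \<Rightarrow> 'l \<Rightarrow> int) \<Rightarrow> nat \<Rightarrow> 'l bmat set" where
  "sched_vertices I D T = {block T 0 S | S. collision_free I D S}"

definition sched_edges :: "('l \<Rightarrow> 'l set set) \<Rightarrow> ('l \<Rightarrow> 'l \<Rightarrow> int) \<Rightarrow> nat \<Rightarrow> ('l bmat \<times> 'l bmat) set" where
  "sched_edges I D T = {(block T 0 S, block T 1 S) | S. collision_free I D S}"

text \<open>A cycle (A_0,...,A_k), k >= 1, is the list [A_0,...,A_k].\<close>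
definition is_cycle :: "('l \<Rightarrow> 'l set set) \<Rightarrow> ('l \<Rightarrow> 'l \<Rightarrow> int) \<Rightarrow> nat \<Rightarrow> 'l bmat list \<Rightarrow> bool" where
  "is_cycle I D T C \<longleftrightarrow> length C \<ge> 2
     \<and> (\<forall>i. i + 1 < length C \<longrightarrow> (C ! i, C ! (i + 1)) \<in> sched_edges I D T)
     \<and> last C = hd C \<and> distinct (butlast C)"

definition cycle_rate :: "nat \<Rightarrow> 'l bmat list \<Rightarrow> real ^ 'l::finite" where
  "cycle_rate T C = (\<chi> l. (1 / (real (length C - 1) * real T)) *
      (\<Sum>i<length C - 1. \<Sum>j<T. if (C ! i) l j then 1 else 0))"

definition rate_region :: "('l::finite \<Rightarrow> 'l set set) \<Rightarrow> ('l \<Rightarrow> 'l \<Rightarrow> int) \<Rightarrow> nat \<Rightarrow> (real ^ 'l) set" where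
  "rate_region I D T = convex hull {cycle_rate T C | C. is_cycle I D T C}"

definition seq_geq :: "'l bmat list \<Rightarrow> 'l bmat list \<Rightarrow> bool" where
  "seq_geq C' C \<longleftrightarrow> length C' = length C \<and>
     (\<forall>i < length C. \<forall>l j. (C ! i) l j \<longrightarrow> (C' ! i) l j)"

definition max_cycles :: "('l \<Rightarrow> 'l set set) \<Rightarrow> ('l \<Rightarrow> 'l \<Rightarrow> int) \<Rightarrow> nat \<Rightarrow> 'l bmat list set" where
  "max_cycles I D T = {C. is_cycle I D T C \<and>
     \<not> (\<exists>C'. is_cycle I D T C' \<and> C' \<noteq> C \<and> length C' = length C \<and> seq_geq C' C)}"

end

theory Submission
  imports Defs
begin

text \<open>A closed walk in the scheduling graph that visits some vertex twice splits into two shorter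
  closed walks, and its rate is the length-weighted average of their rates; so the rate region is
  the convex hull of the rates of all closed walks. Silencing a link keeps a schedule collision
  free, so silencing it along a closed walk shows that the rate region is closed under zeroing a
  coordinate; being convex, it is then closed downward within the nonnegative orthant. Conversely,
  every cycle is dominated entrywise by a maximal cycle of the same length (a dominating cycle with
  the largest number of ones), and domination increases rates.\<close>

definition closed_walk :: "('a \<times> 'a) set \<Rightarrow> 'a list \<Rightarrow> bool" where
  "closed_walk E xs \<longleftrightarrow> xs \<noteq> [] \<and> successively (\<lambda>a b. (a, b) \<in> E) (xs @ [hd xs])"

definition list_mean :: "('a \<Rightarrow> 'v::real_vector) \<Rightarrow> 'a list \<Rightarrow> 'v" where
  "list_mean f xs = (1 / real (length xs)) *\<^sub>R sum_list (map f xs)"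

lemma list_mean_mset_union:
  assumes "mset xs = mset ys + mset zs" and "ys \<noteq> []" and "zs \<noteq> []"
  shows "list_mean f xs = (real (length ys) / real (length xs)) *\<^sub>R list_mean f ys
                        + (real (length zs) / real (length xs)) *\<^sub>R list_mean f zs"
proof -
  have len: "length xs = length ys + length zs"
    using arg_cong[OF assms(1), of size] by simp
  have "sum_list (map f xs) = sum_list (map f ys) + sum_list (map f zs)"
    by (metis assms(1) image_mset_union mset_map sum_mset.union sum_mset_sum_list)
  then show ?thesis
    using assms(2,3) by (simp add: list_mean_def len scaleR_add_right)
qed

lemma closed_walk_split:
  assumes "closed_walk E (a @ [x] @ b @ [x] @ c)"
  shows "closed_walk E (x # b)" and "closed_walk E (a @ x # c)"
proof -
  let ?R = "\<lambda>u v. (u, v) \<in> E"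
  have "hd (a @ [x] @ b @ [x] @ c) = hd (a @ [x])"
    by (cases a) simp_all
  then have walk: "successively ?R (a @ [x] @ b @ [x] @ c @ [hd (a @ [x])])"
    using assms by (simp add: closed_walk_def)
  then have "successively ?R (a @ (x # b @ [x]) @ c @ [hd (a @ [x])])"
    by simp
  then have "successively ?R (x # b @ [x])"
    by (simp only: successively_append_iff)
  then show "closed_walk E (x # b)"
    by (simp add: closed_walk_def)
  have "successively ?R ((a @ [x]) @ b @ [x] @ c @ [hd (a @ [x])])"
    and "successively ?R ((a @ x # b) @ x # c @ [hd (a @ [x])])"
    using walk by simp_all
  then have "successively ?R (a @ [x])" and "successively ?R (x # c @ [hd (a @ [x])])"
    by (simp_all only: successively_append_iff)
  then have "successively ?R (a @ x # c @ [hd (a @ [x])])"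
    by (auto simp: successively_append_iff)
  then show "closed_walk E (a @ x # c)"
    by (cases a) (simp_all add: closed_walk_def)
qed

lemma closed_walk_mean_in_cycle_hull:
  assumes "closed_walk E xs"
  shows "list_mean f xs \<in> convex hull {list_mean f ys | ys. closed_walk E ys \<and> distinct ys}"
  using assms
proof (induction xs rule: length_induct)
  case (1 xs)
  show ?case
  proof (cases "distinct xs")
    case True
    with "1.prems" show ?thesis by (blast intro: hull_inc)
  next
    case False
    then obtain a x b c where xs: "xs = a @ [x] @ b @ [x] @ c"
      using not_distinct_decomp by blast
    let ?H = "convex hull {list_mean f ys | ys. closed_walk E ys \<and> distinct ys}"
    have "list_mean f (x # b) \<in> ?H" and "list_mean f (a @ x # c) \<in> ?H"
      using "1.IH" closed_walk_split[OF "1.prems"[unfolded xs]] by (simp_all add: xs)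
    then have "(real (length (x # b)) / real (length xs)) *\<^sub>R list_mean f (x # b)
             + (real (length (a @ x # c)) / real (length xs)) *\<^sub>R list_mean f (a @ x # c) \<in> ?H"
      by (intro convexD[OF convex_convex_hull]) (simp_all add: xs add_divide_distrib[symmetric])
    moreover have "list_mean f xs
      = (real (length (x # b)) / real (length xs)) *\<^sub>R list_mean f (x # b)
      + (real (length (a @ x # c)) / real (length xs)) *\<^sub>R list_mean f (a @ x # c)"
      by (rule list_mean_mset_union) (simp_all add: xs)
    ultimately show ?thesis
      by simp
  qed
qed

definition zero_coord :: "'n \<Rightarrow> real ^ 'n \<Rightarrow> real ^ 'n" where
  "zero_coord i v = (\<chi> j. if j = i then 0 else v $ j)"

lemma linear_zero_coord: "linear (zero_coord i)"
  by (rule linearI) (simp_all add: zero_coord_def vec_eq_iff)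

lemma convex_closed_downward_if_zero_coord_closed:
  fixes K :: "(real ^ 'n) set"
  assumes "convex K" and zero_closed: "\<And>w i. w \<in> K \<Longrightarrow> zero_coord i w \<in> K"
    and "v \<in> K" and "\<And>i. 0 \<le> u $ i" and "\<And>i. u $ i \<le> v $ i"
  shows "u \<in> K"
proof -
  have "(\<chi> i. if i \<in> F then u $ i else v $ i) \<in> K" for F
    using finite[of F]
  proof (induction F rule: finite_induct)
    case empty
    then show ?case using \<open>v \<in> K\<close> by simp
  next
    case (insert a F)
    define w where "w = (\<chi> i. if i \<in> F then u $ i else v $ i)"
    define t where "t = (if v $ a = 0 then 0 else u $ a / v $ a)"
    have "0 \<le> u $ a" and "u $ a \<le> v $ a"
      using assms(4,5) by auto
    then have t: "0 \<le> t" "t \<le> 1" "u $ a = t * v $ a"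
      by (auto simp: t_def)
    have "(\<chi> i. if i \<in> insert a F then u $ i else v $ i) = t *\<^sub>R w + (1 - t) *\<^sub>R zero_coord a w"
      using \<open>a \<notin> F\<close> t(3) by (auto simp: vec_eq_iff zero_coord_def w_def algebra_simps)
    also have "\<dots> \<in> K"
      using insert.IH t(1,2) by (intro convexD[OF \<open>convex K\<close>] zero_closed) (simp_all add: w_def)
    finally show ?case .
  qed
  from this[of UNIV] show ?thesis
    by simp
qed

lemma convex_hull_dominated:
  fixes X Y :: "(real ^ 'n) set"
  assumes "\<And>x. x \<in> X \<Longrightarrow> \<exists>y\<in>Y. \<forall>i. x $ i \<le> y $ i" and "x \<in> convex hull X"
  shows "\<exists>y\<in>convex hull Y. \<forall>i. x $ i \<le> y $ i"
proof -
  let ?P = "{x. \<exists>y\<in>convex hull Y. \<forall>i. x $ i \<le> y $ i}"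
  have "X \<subseteq> ?P"
  proof
    fix x
    assume "x \<in> X"
    then obtain y where "y \<in> Y" and "\<forall>i. x $ i \<le> y $ i"
      using assms(1) by blast
    then show "x \<in> ?P"
      using hull_inc[of y Y] by blast
  qed
  moreover have "convex ?P"
  proof (rule convexI)
    fix x x' and s t :: real
    assume "x \<in> ?P" "x' \<in> ?P" and st: "0 \<le> s" "0 \<le> t" "s + t = 1"
    then obtain y y' where y: "y \<in> convex hull Y" "\<forall>i. x $ i \<le> y $ i"
      and y': "y' \<in> convex hull Y" "\<forall>i. x' $ i \<le> y' $ i"
      by blast
    have "s *\<^sub>R y + t *\<^sub>R y' \<in> convex hull Y"
      using y(1) y'(1) st by (rule convexD[OF convex_convex_hull])
    moreover have "\<forall>i. (s *\<^sub>R x + t *\<^sub>R x') $ i \<le> (s *\<^sub>R y + t *\<^sub>R y') $ i"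
      using y(2) y'(2) st by (auto intro!: add_mono mult_left_mono)
    ultimately show "s *\<^sub>R x + t *\<^sub>R x' \<in> ?P"
      by blast
  qed
  ultimately have "convex hull X \<subseteq> ?P"
    by (rule hull_minimal)
  with assms(2) show ?thesis
    by blast
qed

definition block_rate :: "nat \<Rightarrow> 'l bmat \<Rightarrow> real ^ 'l::finite" where
  "block_rate T A = (\<chi> l. (\<Sum>j<T. if A l j then 1 else 0) / real T)"

lemma is_cycle_iff_closed_walk:
  "is_cycle I D T C \<longleftrightarrow>
     (\<exists>xs. C = xs @ [hd xs] \<and> closed_walk (sched_edges I D T) xs \<and> distinct xs)"
proof
  assume C: "is_cycle I D T C"
  define xs where "xs = butlast C"
  have "length C \<ge> 2" and "last C = hd C" and "distinct xs"
    using C by (simp_all add: is_cycle_def xs_def)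
  have "length xs = length C - 1"
    by (simp add: xs_def)
  with \<open>length C \<ge> 2\<close> have "xs \<noteq> []" and "C \<noteq> []"
    by auto
  then have "C = xs @ [last C]"
    by (simp add: xs_def)
  moreover have "hd (xs @ [last C]) = hd xs"
    using \<open>xs \<noteq> []\<close> by simp
  ultimately have C_eq: "C = xs @ [hd xs]"
    using \<open>last C = hd C\<close> by simp
  have "successively (\<lambda>a b. (a, b) \<in> sched_edges I D T) C"
    using C by (simp add: is_cycle_def successively_conv_nth)
  then have "closed_walk (sched_edges I D T) xs"
    using \<open>xs \<noteq> []\<close> C_eq by (simp add: closed_walk_def)
  with C_eq \<open>distinct xs\<close>
  show "\<exists>xs. C = xs @ [hd xs] \<and> closed_walk (sched_edges I D T) xs \<and> distinct xs"
    by blast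
next
  assume "\<exists>xs. C = xs @ [hd xs] \<and> closed_walk (sched_edges I D T) xs \<and> distinct xs"
  then obtain xs where C: "C = xs @ [hd xs]" and "xs \<noteq> []" and "distinct xs"
    and "successively (\<lambda>a b. (a, b) \<in> sched_edges I D T) C"
    by (auto simp: closed_walk_def)
  then have "\<forall>i. i + 1 < length C \<longrightarrow> (C ! i, C ! (i + 1)) \<in> sched_edges I D T"
    by (simp add: successively_conv_nth)
  moreover have "length C \<ge> 2" and "last C = hd C" and "distinct (butlast C)"
    using C \<open>xs \<noteq> []\<close> \<open>distinct xs\<close> by (simp_all add: Suc_le_eq)
  ultimately show "is_cycle I D T C"
    by (simp add: is_cycle_def)
qed

lemma sum_list_component: "sum_list (map f xs) $ i = sum_list (map (\<lambda>x. f x $ i) xs)"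
  by (induction xs) simp_all

lemma sum_lessThan_length_nth_append: "(\<Sum>i<length xs. g ((xs @ ys) ! i)) = sum_list (map g xs)"
proof -
  have "(\<Sum>i<length xs. g ((xs @ ys) ! i)) = (\<Sum>i<length xs. map g xs ! i)"
    by (rule sum.cong) (simp_all add: nth_append)
  then show ?thesis
    by (simp add: sum_list_sum_nth atLeast0LessThan)
qed

lemma cycle_rate_eq_list_mean: "cycle_rate T (xs @ [hd xs]) = list_mean (block_rate T) xs"
proof -
  have "cycle_rate T (xs @ [hd xs]) $ l = list_mean (block_rate T) xs $ l" for l
  proof -
    let ?count = "\<lambda>A. \<Sum>j<T. if A l j then 1 else (0::real)"
    have "cycle_rate T (xs @ [hd xs]) $ l
        = 1 / (real (length xs) * real T) * (\<Sum>i<length xs. ?count ((xs @ [hd xs]) ! i))"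
      by (simp add: cycle_rate_def)
    also have "\<dots> = 1 / (real (length xs) * real T) * sum_list (map ?count xs)"
      using sum_lessThan_length_nth_append[of ?count xs "[hd xs]"] by simp
    also have "\<dots> = list_mean (block_rate T) xs $ l"
      by (simp add: list_mean_def block_rate_def sum_list_component divide_inverse sum_list_mult_const)
    finally show ?thesis .
  qed
  then show ?thesis
    by (simp add: vec_eq_iff)
qed

lemma rate_region_eq_convex_hull_cycle_means:
  "rate_region I D T = convex hull
     {list_mean (block_rate T) xs | xs. closed_walk (sched_edges I D T) xs \<and> distinct xs}"
proof -
  have "{cycle_rate T C | C. is_cycle I D T C}
      = {list_mean (block_rate T) xs | xs. closed_walk (sched_edges I D T) xs \<and> distinct xs}"
    unfolding is_cycle_iff_closed_walk
    by (auto simp: cycle_rate_eq_list_mean) (metis cycle_rate_eq_list_mean)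
  then show ?thesis
    by (simp add: rate_region_def)
qed

lemma closed_walk_rate_in_rate_region:
  assumes "closed_walk (sched_edges I D T) xs"
  shows "list_mean (block_rate T) xs \<in> rate_region I D T"
  using closed_walk_mean_in_cycle_hull[OF assms]
  by (simp add: rate_region_eq_convex_hull_cycle_means)

definition mute_link :: "'l \<Rightarrow> ('l \<Rightarrow> 'b \<Rightarrow> bool) \<Rightarrow> 'l \<Rightarrow> 'b \<Rightarrow> bool" where
  "mute_link l S = (\<lambda>l' t. S l' t \<and> l' \<noteq> l)"

lemma collision_free_antimono:
  assumes "collision_free I D S" and "\<And>l t. S' l t \<Longrightarrow> S l t"
  shows "collision_free I D S'"
  using assms unfolding collision_free_def has_collision_def by blast

lemma block_mute_link: "block T k (mute_link l S) = mute_link l (block T k S)"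
  by (auto simp: block_def mute_link_def fun_eq_iff)

lemma sched_edges_mute_link:
  assumes "(A, B) \<in> sched_edges I D T"
  shows "(mute_link l A, mute_link l B) \<in> sched_edges I D T"
proof -
  obtain S where "A = block T 0 S" "B = block T 1 S" "collision_free I D S"
    using assms unfolding sched_edges_def by blast
  moreover have "collision_free I D (mute_link l S)"
    using \<open>collision_free I D S\<close> by (rule collision_free_antimono) (simp add: mute_link_def)
  ultimately show ?thesis
    unfolding sched_edges_def by (auto simp flip: block_mute_link)
qed

lemma closed_walk_map:
  assumes "closed_walk E xs" and "\<And>a b. (a, b) \<in> E \<Longrightarrow> (g a, g b) \<in> E"
  shows "closed_walk E (map g xs)"
proof -
  have "successively (\<lambda>a b. (a, b) \<in> E) (xs @ [hd xs])" and "xs \<noteq> []"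
    using assms(1) by (simp_all add: closed_walk_def)
  then have "successively (\<lambda>a b. (a, b) \<in> E) (map g (xs @ [hd xs]))"
    unfolding successively_map by (auto elim: successively_mono intro: assms(2))
  with \<open>xs \<noteq> []\<close> show ?thesis
    by (simp add: closed_walk_def hd_map)
qed

lemma list_mean_linear:
  assumes "linear h"
  shows "list_mean (\<lambda>x. h (f x)) xs = h (list_mean f xs)"
proof -
  have "sum_list (map (\<lambda>x. h (f x)) xs) = h (sum_list (map f xs))"
    by (induction xs) (simp_all add: linear_add[OF assms] linear_0[OF assms])
  then show ?thesis
    by (simp add: list_mean_def linear_scale[OF assms])
qed

lemma block_rate_mute_link: "block_rate T (mute_link l A) = zero_coord l (block_rate T A)"
  by (simp add: block_rate_def zero_coord_def mute_link_def vec_eq_iff)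

lemma rate_region_zero_coord:
  assumes "v \<in> rate_region I D T"
  shows "zero_coord l v \<in> rate_region I D T"
proof -
  let ?X = "{list_mean (block_rate T) xs | xs. closed_walk (sched_edges I D T) xs \<and> distinct xs}"
  have "zero_coord l ` ?X \<subseteq> rate_region I D T"
  proof
    fix y assume "y \<in> zero_coord l ` ?X"
    then obtain xs where xs: "closed_walk (sched_edges I D T) xs"
      and y: "y = zero_coord l (list_mean (block_rate T) xs)"
      by blast
    have "list_mean (block_rate T) (map (mute_link l) xs)
        = list_mean (\<lambda>A. zero_coord l (block_rate T A)) xs"
      by (simp add: list_mean_def block_rate_mute_link o_def)
    then have "y = list_mean (block_rate T) (map (mute_link l) xs)"
      by (simp add: y list_mean_linear[OF linear_zero_coord])
    moreover have "closed_walk (sched_edges I D T) (map (mute_link l) xs)"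
      using xs sched_edges_mute_link by (rule closed_walk_map)
    ultimately show "y \<in> rate_region I D T"
      by (simp add: closed_walk_rate_in_rate_region)
  qed
  then have "convex hull (zero_coord l ` ?X) \<subseteq> rate_region I D T"
    by (simp add: hull_minimal rate_region_def)
  then show ?thesis
    using assms by (auto simp: rate_region_eq_convex_hull_cycle_means
        simp flip: convex_hull_linear_image[OF linear_zero_coord])
qed

lemma rate_region_downward_closed:
  assumes "R' \<in> rate_region I D T" and "\<And>l. 0 \<le> R $ l" and "\<And>l. R $ l \<le> R' $ l"
  shows "R \<in> rate_region I D T"
  using _ rate_region_zero_coord assms
  by (rule convex_closed_downward_if_zero_coord_closed) (simp add: rate_region_def)

lemma sched_edges_columns_lt:
  assumes "(A, B) \<in> sched_edges I D T"
  shows "A l j \<Longrightarrow> j < T" and "B l j \<Longrightarrow> j < T"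
  using assms by (auto simp: sched_edges_def block_def)

lemma is_cycle_columns_lt:
  assumes "is_cycle I D T C" and "i < length C" and "(C ! i) l j"
  shows "j < T"
proof (cases "i + 1 < length C")
  case True
  then have "(C ! i, C ! (i + 1)) \<in> sched_edges I D T"
    using assms(1) by (simp add: is_cycle_def)
  then show ?thesis
    using assms(3) by (rule sched_edges_columns_lt)
next
  case False
  have "length C \<ge> 2"
    using assms(1) by (simp add: is_cycle_def)
  with False assms(2) have i: "i = (i - 1) + 1" and "(i - 1) + 1 < length C"
    by linarith+
  moreover have "\<forall>k. k + 1 < length C \<longrightarrow> (C ! k, C ! (k + 1)) \<in> sched_edges I D T"
    using assms(1) by (simp add: is_cycle_def)
  ultimately have "(C ! (i - 1), C ! i) \<in> sched_edges I D T"
    by metis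
  then show ?thesis
    using assms(3) by (rule sched_edges_columns_lt)
qed

lemma seq_geq_refl: "seq_geq C C"
  by (simp add: seq_geq_def)

lemma seq_geq_trans: "seq_geq A B \<Longrightarrow> seq_geq B C \<Longrightarrow> seq_geq A C"
  by (auto simp: seq_geq_def)

definition seq_support :: "nat \<Rightarrow> 'l bmat list \<Rightarrow> (nat \<times> 'l \<times> nat) set" where
  "seq_support T C = {(i, l, j). i < length C \<and> j < T \<and> (C ! i) l j}"

lemma seq_support_subset: "seq_support T C \<subseteq> {..<length C} \<times> UNIV \<times> {..<T}"
  by (auto simp: seq_support_def)

lemma finite_seq_support: "finite (seq_support T (C :: ('l::finite) bmat list))"
  by (rule finite_subset[OF seq_support_subset]) simp

lemma seq_support_psubset:
  assumes "is_cycle I D T C'" and "seq_geq C' C" and "C' \<noteq> C"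
  shows "seq_support T C \<subset> seq_support T C'"
proof
  show "seq_support T C \<subseteq> seq_support T C'"
    using assms(2) by (auto simp: seq_support_def seq_geq_def)
  have len: "length C' = length C"
    using assms(2) by (simp add: seq_geq_def)
  then obtain i where i: "i < length C" and "C' ! i \<noteq> C ! i"
    using assms(3) nth_equalityI by metis
  then obtain l j where "(C' ! i) l j \<noteq> (C ! i) l j"
    by (auto simp: fun_eq_iff)
  with i assms(2) have "(C' ! i) l j" and "\<not> (C ! i) l j"
    by (auto simp: seq_geq_def)
  moreover have "j < T"
    using is_cycle_columns_lt[OF assms(1)] i len \<open>(C' ! i) l j\<close> by simp
  ultimately have "(i, l, j) \<in> seq_support T C' - seq_support T C"
    using i len by (simp add: seq_support_def)
  then show "seq_support T C \<noteq> seq_support T C'"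
    by blast
qed

lemma dominated_by_max_cycle:
  fixes I :: "'l::finite \<Rightarrow> 'l set set"
  assumes "is_cycle I D T C\<^sub>0"
  shows "\<exists>C\<in>max_cycles I D T. seq_geq C C\<^sub>0"
proof -
  let ?P = "\<lambda>C. is_cycle I D T C \<and> seq_geq C C\<^sub>0"
  let ?box = "{..<length C\<^sub>0} \<times> (UNIV :: 'l set) \<times> {..<T}"
  have "card (seq_support T C) < Suc (card ?box)" if "?P C" for C
  proof -
    have "length C = length C\<^sub>0"
      using that by (simp add: seq_geq_def)
    then have "card (seq_support T C) \<le> card ?box"
      using seq_support_subset[of T C] by (intro card_mono) auto
    then show ?thesis
      by (simp only: less_Suc_eq_le)
  qed
  then obtain C where C: "?P C"
    and greatest: "\<And>C'. ?P C' \<Longrightarrow> card (seq_support T C') \<le> card (seq_support T C)"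
    using ex_has_greatest_nat[of ?P C\<^sub>0 "\<lambda>C. card (seq_support T C)"] assms seq_geq_refl
    by blast
  have "C \<in> max_cycles I D T"
    unfolding max_cycles_def
  proof (intro CollectI conjI notI)
    show "is_cycle I D T C"
      using C by simp
    assume "\<exists>C'. is_cycle I D T C' \<and> C' \<noteq> C \<and> length C' = length C \<and> seq_geq C' C"
    then obtain C' where "is_cycle I D T C'" "C' \<noteq> C" "seq_geq C' C"
      by blast
    then have "seq_support T C \<subset> seq_support T C'" and "?P C'"
      using C seq_support_psubset seq_geq_trans by blast+
    from this(1) have "card (seq_support T C) < card (seq_support T C')"
      by (rule psubset_card_mono[OF finite_seq_support])
    with greatest[OF \<open>?P C'\<close>] show False
      by simp
  qed
  with C show ?thesis
    by blast
qed

lemma cycle_rate_mono: "seq_geq C' C \<Longrightarrow> cycle_rate T C $ l \<le> cycle_rate T C' $ l"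
  unfolding cycle_rate_def seq_geq_def
  by (auto intro!: divide_right_mono sum_mono)

lemma rate_region_dominated_by_max_cycle_rates:
  fixes I :: "'l::finite \<Rightarrow> 'l set set"
  assumes "R \<in> rate_region I D T"
  shows "\<exists>R' \<in> convex hull {cycle_rate T C | C. C \<in> max_cycles I D T}. \<forall>l. R $ l \<le> R' $ l"
  using assms unfolding rate_region_def
proof (rule convex_hull_dominated[rotated])
  fix x
  assume "x \<in> {cycle_rate T C | C. is_cycle I D T C}"
  then obtain C where "is_cycle I D T C" and x: "x = cycle_rate T C"
    by blast
  then obtain C' where "C' \<in> max_cycles I D T" and "seq_geq C' C"
    using dominated_by_max_cycle by blast
  then show "\<exists>y\<in>{cycle_rate T C | C. C \<in> max_cycles I D T}. \<forall>l. x $ l \<le> y $ l"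
    unfolding x by (blast intro: cycle_rate_mono)
qed

theorem theorem9:
  fixes I :: "'l::finite \<Rightarrow> 'l set set" and D :: "'l \<Rightarrow> 'l \<Rightarrow> int"
    and T :: nat and R :: "real ^ 'l"
  assumes "\<forall>l. \<forall>\<phi>\<in>I l. \<phi> \<noteq> {}"
    and "T \<ge> 1"
    and "\<forall>l. R $ l \<ge> 0"
  shows "R \<in> rate_region I D T \<longleftrightarrow>
    (\<exists>R' \<in> convex hull {cycle_rate T C | C. C \<in> max_cycles I D T}. \<forall>l. R $ l \<le> R' $ l)"
proof
  assume "R \<in> rate_region I D T"
  then show "\<exists>R' \<in> convex hull {cycle_rate T C | C. C \<in> max_cycles I D T}. \<forall>l. R $ l \<le> R' $ l"
    by (rule rate_region_dominated_by_max_cycle_rates)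
next
  assume "\<exists>R' \<in> convex hull {cycle_rate T C | C. C \<in> max_cycles I D T}. \<forall>l. R $ l \<le> R' $ l"
  then obtain R' where "R' \<in> convex hull {cycle_rate T C | C. C \<in> max_cycles I D T}"
    and "\<forall>l. R $ l \<le> R' $ l"
    by blast
  moreover have "convex hull {cycle_rate T C | C. C \<in> max_cycles I D T} \<subseteq> rate_region I D T"
    unfolding rate_region_def max_cycles_def by (rule hull_mono) blast
  ultimately show "R \<in> rate_region I D T"
    using assms(3) by (blast intro: rate_region_downward_closed)
qed

end
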